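(* Let $\Pi$ be a finite set of propositional variables and let $M^1=\langle W^1,\mathcal{N}^1,V^1\rangle$, $M^2=\langle W^2,\mathcal{N}^2,V^2\rangle$ be nIML1-models for the language over $\Pi$. Let $n\geq 0$. For every $w_1\in W^1$ and $w_2\in W^2$ the following are equivalent: (1) $w_1$ and $w_2$ are $n$-bisimilar; (2) $w_1$ and $w_2$ agree on all formulas (over $\Pi$) of degree at most $n$, i.e. for each such formula $\varphi$, $w_1\Vdash_{M^1}\varphi$ iff $w_2\Vdash_{M^2}\varphi$.
   Context: Formulas over $\Pi$ are built from the variables in $\Pi$ and $\bot$ using binary $\land,\lor,\rightarrow,\rightsquigarrow$ and unary $\Delta$ ($\sim\varphi$ abbreviates $\varphi\rightsquigarrow\bot$). An nIML1-model for this language is a triple $\langle W,\mathcal{N},V\rangle$ with $W\neq\emptyset$, $\mathcal{N}:W\to P(P(W))$ satisfying for all $w$: (a) $w\in\bigcap\mathcal{N}_w$; (b) $\bigcap\mathcal{N}_w\in\mathcal{N}_w$; (c) $u\in\bigcap\mathcal{N}_w\Rightarrow\bigcap\mathcal{N}_u\subseteq\bigcap\mathcal{N}_w$; (d) $\bigcap\mathcal{N}_w\subseteq X\subseteq\bigcup\mathcal{N}_w\Rightarrow X\in\mathcal{N}_w$; (e) $u\in\bigcap\mathcal{N}_w\Rightarrow\bigcup\mathcal{N}_u\subseteq\bigcup\mathcal{N}_w$ ($\bigcap\mathcal{N}_w$, $\bigcup\mathcal{N}_w$ the intersection and union of the family $\mathcal{N}_w$), and $V:\Pi\to P(W)$ with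 $w\in V(q)\Rightarrow\bigcap\mathcal{N}_w\subseteq V(q)$. Forcing: atoms via $V$; $\bot$ never; $\land,\lor$ pointwise; $w\Vdash\varphi\rightarrow\psi$ iff every $v\in\bigcap\mathcal{N}_w$ has $v\nVdash\varphi$ or $v\Vdash\psi$; $w\Vdash\varphi\rightsquigarrow\psi$ iff every $v\in\bigcup\mathcal{N}_w$ has $v\nVdash\varphi$ or $v\Vdash\psi$; $w\Vdash\Delta\varphi$ iff every $v\in\bigcup\mathcal{N}_w$ has $v\Vdash\varphi$. Degree: $deg(q)=deg(\bot)=0$; $deg(\varphi\land\psi)=deg(\varphi\lor\psi)=\max(deg\varphi,deg\psi)$; $deg(\varphi\rightarrow\psi)=deg(\varphi\rightsquigarrow\psi)=1+\max(deg\varphi,deg\psi)$; $deg(\Delta\varphi)=1+deg\varphi$. Worlds $w_1\in W^1$, $w_2\in W^2$ are $n$-bisimilar if there are relations $R_n\subseteq R_{n-1}\subseteq\dots\subseteq R_0\subseteq W^1\times W^2$ such that: $w_1R_nw_2$; whenever $xR_0y$, $x$ and $y$ force the same propositional variables; and for each $i$ with $i+1\leq n$ and all $x_1,x_2$ with $x_1R_{i+1}x_2$: for every $y\in\bigcap\mathcal{N}^2_{x_2}$ there is $x\in\bigcap\mathcal{N}^1_{x_1}$ with $xR_iy$; for every $y\in\bigcup\mathcal{N}^2_{x_2}$ there is $x\in\bigcup\mathcal{N}^1_{x_1}$ with $xR_iy$; for every $x\in\bigcap\mathcal{N}^1_{x_1}$ there is $y\in\bigcap\mathcal{N}^2_{x_2}$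 with $xR_iy$; for every $x\in\bigcup\mathcal{N}^1_{x_1}$ there is $y\in\bigcup\mathcal{N}^2_{x_2}$ with $xR_iy$. *)

theory Defs
  imports Main
begin

datatype 'p fm =
    Atom 'p
  | Bot
  | And "'p fm" "'p fm"
  | Or "'p fm" "'p fm"
  | Imp "'p fm" "'p fm"
  | SImp "'p fm" "'p fm"
  | Delta "'p fm"

fun atoms :: "'p fm \<Rightarrow> 'p set" where
  "atoms (Atom q) = {q}"
| "atoms Bot = {}"
| "atoms (And a b) = atoms a \<union> atoms b"
| "atoms (Or a b) = atoms a \<union> atoms b"
| "atoms (Imp a b) = atoms a \<union> atoms b"
| "atoms (SImp a b) = atoms a \<union> atoms b"
| "atoms (Delta a) = atoms a"

fun deg :: "'p fm \<Rightarrow> nat" where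
  "deg (Atom q) = 0"
| "deg Bot = 0"
| "deg (And a b) = max (deg a) (deg b)"
| "deg (Or a b) = max (deg a) (deg b)"
| "deg (Imp a b) = 1 + max (deg a) (deg b)"
| "deg (SImp a b) = 1 + max (deg a) (deg b)"
| "deg (Delta a) = 1 + deg a"

text \<open>nIML1-model over the variable set Pi: W, neighbourhood function N, valuation V
  (V is only meaningful on Pi).\<close>
definition nIML1_model :: "'p set \<Rightarrow> 'w set \<Rightarrow> ('w \<Rightarrow> 'w set set) \<Rightarrow> ('p \<Rightarrow> 'w set) \<Rightarrow> bool" where
  "nIML1_model Pi W N V \<longleftrightarrow>
     W \<noteq> {} \<and>
     (\<forall>w\<in>W. N w \<subseteq> Pow W) \<and>
     (\<forall>w\<in>W. w \<in> \<Inter>(N w)) \<and>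
     (\<forall>w\<in>W. \<Inter>(N w) \<in> N w) \<and>
     (\<forall>w\<in>W. \<forall>u. u \<in> \<Inter>(N w) \<longrightarrow> \<Inter>(N u) \<subseteq> \<Inter>(N w)) \<and>
     (\<forall>w\<in>W. \<forall>X. \<Inter>(N w) \<subseteq> X \<and> X \<subseteq> \<Union>(N w) \<longrightarrow> X \<in> N w) \<and>
     (\<forall>w\<in>W. \<forall>u. u \<in> \<Inter>(N w) \<longrightarrow> \<Union>(N u) \<subseteq> \<Union>(N w)) \<and>
     (\<forall>q\<in>Pi. V q \<subseteq> W) \<and>
     (\<forall>q\<in>Pi. \<forall>w\<in>W. w \<in> V q \<longrightarrow> \<Inter>(N w) \<subseteq> V q)"

fun forces :: "('w \<Rightarrow> 'w set set) \<Rightarrow> ('p \<Rightarrow> 'w set) \<Rightarrow> 'w \<Rightarrow> 'p fm \<Rightarrow> bool" where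
  "forces N V w (Atom q) = (w \<in> V q)"
| "forces N V w Bot = False"
| "forces N V w (And a b) = (forces N V w a \<and> forces N V w b)"
| "forces N V w (Or a b) = (forces N V w a \<or> forces N V w b)"
| "forces N V w (Imp a b) = (\<forall>v\<in>\<Inter>(N w). \<not> forces N V v a \<or> forces N V v b)"
| "forces N V w (SImp a b) = (\<forall>v\<in>\<Union>(N w). \<not> forces N V v a \<or> forces N V v b)"
| "forces N V w (Delta a) = (\<forall>v\<in>\<Union>(N w). forces N V v a)"

definition n_bisimilar ::
  "'p set \<Rightarrow> 'a set \<Rightarrow> ('a \<Rightarrow> 'a set set) \<Rightarrow> ('p \<Rightarrow> 'a set) \<Rightarrow>
   'b set \<Rightarrow> ('b \<Rightarrow> 'b set set) \<Rightarrow> ('p \<Rightarrow> 'b set) \<Rightarrow> nat \<Rightarrow> 'a \<Rightarrow> 'b \<Rightarrow> bool" where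
  "n_bisimilar Pi W1 N1 V1 W2 N2 V2 n w1 w2 \<longleftrightarrow>
    (\<exists>R :: nat \<Rightarrow> ('a \<times> 'b) set.
       R 0 \<subseteq> W1 \<times> W2 \<and>
       (\<forall>i<n. R (Suc i) \<subseteq> R i) \<and>
       (w1, w2) \<in> R n \<and>
       (\<forall>x y. (x, y) \<in> R 0 \<longrightarrow> (\<forall>q\<in>Pi. x \<in> V1 q \<longleftrightarrow> y \<in> V2 q)) \<and>
       (\<forall>i. i + 1 \<le> n \<longrightarrow> (\<forall>x1 x2. (x1, x2) \<in> R (i + 1) \<longrightarrow>
          (\<forall>y\<in>\<Inter>(N2 x2). \<exists>x\<in>\<Inter>(N1 x1). (x, y) \<in> R i) \<and>
          (\<forall>y\<in>\<Union>(N2 x2). \<exists>x\<in>\<Union>(N1 x1). (x, y) \<in> R i) \<and>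
          (\<forall>x\<in>\<Inter>(N1 x1). \<exists>y\<in>\<Inter>(N2 x2). (x, y) \<in> R i) \<and>
          (\<forall>x\<in>\<Union>(N1 x1). \<exists>y\<in>\<Union>(N2 x2). (x, y) \<in> R i))))"

end

theory Submission imports Defs begin

(* The degree-(i+1) theory of a world is determined by the atoms it forces together with the
   sets of degree-i theories realised in the intersection and in the union of its
   neighbourhoods.  Over finitely many variables there are hence only finitely many theories
   of each degree, so a world whose degree-i theory is missing from such a finite set can be
   separated from it by a conjunction chi and a disjunction delta of degree-i formulas.  If
   w1 and w2 share their degree-(i+1) theory, the formulas chi -> delta and chi ~> delta (or,
   when chi is empty, delta itself together with persistence, and Delta delta) transfer every
   degree-i theory met around w2 to one met around w1, which makes "same degree-i theory" an
   n-bisimulation. *)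

definition fm_upto :: "'p set \<Rightarrow> nat \<Rightarrow> 'p fm set" where
  "fm_upto Pi i = {\<phi>. atoms \<phi> \<subseteq> Pi \<and> deg \<phi> \<le> i}"

definition theory_of ::
  "'p set \<Rightarrow> nat \<Rightarrow> ('w \<Rightarrow> 'w set set) \<Rightarrow> ('p \<Rightarrow> 'w set) \<Rightarrow> 'w \<Rightarrow> 'p fm set" where
  "theory_of Pi i N V w = {\<phi> \<in> fm_upto Pi i. forces N V w \<phi>}"

lemma fm_upto_Suc_iff [simp]:
  "Imp a b \<in> fm_upto Pi (Suc i) \<longleftrightarrow> a \<in> fm_upto Pi i \<and> b \<in> fm_upto Pi i"
  "SImp a b \<in> fm_upto Pi (Suc i) \<longleftrightarrow> a \<in> fm_upto Pi i \<and> b \<in> fm_upto Pi i"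
  "Delta a \<in> fm_upto Pi (Suc i) \<longleftrightarrow> a \<in> fm_upto Pi i"
  unfolding fm_upto_def by auto

lemma fm_upto_SucI: "\<phi> \<in> fm_upto Pi i \<Longrightarrow> \<phi> \<in> fm_upto Pi (Suc i)"
  unfolding fm_upto_def by simp

lemma theory_of_eqI:
  "(\<And>\<phi>. \<phi> \<in> fm_upto Pi i \<Longrightarrow> forces N V x \<phi> \<longleftrightarrow> forces N' V' y \<phi>) \<Longrightarrow>
   theory_of Pi i N V x = theory_of Pi i N' V' y"
  unfolding theory_of_def by blast

lemma theory_of_eqD:
  "theory_of Pi i N V x = theory_of Pi i N' V' y \<Longrightarrow> \<phi> \<in> fm_upto Pi i \<Longrightarrow>
   forces N V x \<phi> \<longleftrightarrow> forces N' V' y \<phi>"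
  unfolding theory_of_def by blast

lemma theory_of_Suc_eqD:
  "theory_of Pi (Suc i) N V x = theory_of Pi (Suc i) N' V' y \<Longrightarrow>
   theory_of Pi i N V x = theory_of Pi i N' V' y"
  unfolding theory_of_def fm_upto_def by (auto simp: set_eq_iff)

lemma nIML1_modelD:
  assumes "nIML1_model Pi W N V" "w \<in> W"
  shows "w \<in> \<Inter>(N w)" "\<Inter>(N w) \<subseteq> \<Union>(N w)" "\<Union>(N w) \<subseteq> W"
    and "u \<in> \<Inter>(N w) \<Longrightarrow> \<Inter>(N u) \<subseteq> \<Inter>(N w)"
    and "u \<in> \<Inter>(N w) \<Longrightarrow> \<Union>(N u) \<subseteq> \<Union>(N w)"
    and "q \<in> Pi \<Longrightarrow> w \<in> V q \<Longrightarrow> \<Inter>(N w) \<subseteq> V q"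
proof -
  have "N w \<subseteq> Pow W" "\<Inter>(N w) \<in> N w" "w \<in> \<Inter>(N w)"
    and Inter_mono: "\<forall>u. u \<in> \<Inter>(N w) \<longrightarrow> \<Inter>(N u) \<subseteq> \<Inter>(N w)"
    and Union_mono: "\<forall>u. u \<in> \<Inter>(N w) \<longrightarrow> \<Union>(N u) \<subseteq> \<Union>(N w)"
    and atoms_up: "\<forall>q\<in>Pi. w \<in> V q \<longrightarrow> \<Inter>(N w) \<subseteq> V q"
    using assms unfolding nIML1_model_def by auto
  then show "w \<in> \<Inter>(N w)" "\<Inter>(N w) \<subseteq> \<Union>(N w)" "\<Union>(N w) \<subseteq> W" by auto
  show "u \<in> \<Inter>(N w) \<Longrightarrow> \<Inter>(N u) \<subseteq> \<Inter>(N w)" using Inter_mono by blast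
  show "u \<in> \<Inter>(N w) \<Longrightarrow> \<Union>(N u) \<subseteq> \<Union>(N w)" using Union_mono by blast
  show "q \<in> Pi \<Longrightarrow> w \<in> V q \<Longrightarrow> \<Inter>(N w) \<subseteq> V q" using atoms_up by blast
qed

lemma forces_persistent:
  assumes "nIML1_model Pi W N V" "w \<in> W" "atoms \<phi> \<subseteq> Pi" "forces N V w \<phi>" "v \<in> \<Inter>(N w)"
  shows "forces N V v \<phi>"
  using assms(3-5)
proof (induction \<phi> arbitrary: v)
  case (Atom q)
  then show ?case using nIML1_modelD(6)[OF assms(1,2)] by auto
next
  case (Imp a b)
  then show ?case using nIML1_modelD(4)[OF assms(1,2) Imp.prems(3)] by auto
next
  case (SImp a b)
  then show ?case using nIML1_modelD(5)[OF assms(1,2) SImp.prems(3)] by auto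
next
  case (Delta a)
  then show ?case using nIML1_modelD(5)[OF assms(1,2) Delta.prems(3)] by auto
qed auto

lemma forces_modal_theory_of:
  assumes "a \<in> fm_upto Pi i" "b \<in> fm_upto Pi i"
  shows "forces N V x (Imp a b) \<longleftrightarrow> (\<forall>t \<in> theory_of Pi i N V ` \<Inter>(N x). a \<in> t \<longrightarrow> b \<in> t)"
    and "forces N V x (SImp a b) \<longleftrightarrow> (\<forall>t \<in> theory_of Pi i N V ` \<Union>(N x). a \<in> t \<longrightarrow> b \<in> t)"
    and "forces N V x (Delta a) \<longleftrightarrow> (\<forall>t \<in> theory_of Pi i N V ` \<Union>(N x). a \<in> t)"
  using assms unfolding theory_of_def by auto

lemma theory_of_0_eqI:
  assumes "{q \<in> Pi. x \<in> V q} = {q \<in> Pi. y \<in> V' q}"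
  shows "theory_of Pi 0 N V x = theory_of Pi 0 N' V' y"
proof (rule theory_of_eqI)
  show "\<phi> \<in> fm_upto Pi 0 \<Longrightarrow> forces N V x \<phi> \<longleftrightarrow> forces N' V' y \<phi>" for \<phi>
    using assms by (induction \<phi>) (auto simp: fm_upto_def)
qed

lemma theory_of_Suc_eqI:
  assumes atoms_eq: "{q \<in> Pi. x \<in> V q} = {q \<in> Pi. y \<in> V' q}"
    and Inter_eq: "theory_of Pi i N V ` \<Inter>(N x) = theory_of Pi i N' V' ` \<Inter>(N' y)"
    and Union_eq: "theory_of Pi i N V ` \<Union>(N x) = theory_of Pi i N' V' ` \<Union>(N' y)"
  shows "theory_of Pi (Suc i) N V x = theory_of Pi (Suc i) N' V' y"
proof (rule theory_of_eqI)
  show "\<phi> \<in> fm_upto Pi (Suc i) \<Longrightarrow> forces N V x \<phi> \<longleftrightarrow> forces N' V' y \<phi>" for \<phi>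
  proof (induction \<phi>)
    case (Imp a b)
    then have "a \<in> fm_upto Pi i" "b \<in> fm_upto Pi i" by simp_all
    then show ?case by (simp only: forces_modal_theory_of Inter_eq)
  next
    case (SImp a b)
    then have "a \<in> fm_upto Pi i" "b \<in> fm_upto Pi i" by simp_all
    then show ?case by (simp only: forces_modal_theory_of Union_eq)
  next
    case (Delta a)
    then have "a \<in> fm_upto Pi i" by simp
    then show ?case by (simp only: forces_modal_theory_of(3)[where b = a] Union_eq)
  qed (use atoms_eq in \<open>auto simp: fm_upto_def\<close>)
qed

lemma finite_range_factor:
  assumes "finite (range g)" and "\<And>x y. g x = g y \<Longrightarrow> f x = f y"
  shows "finite (range f)"
proof -
  have "f (inv g (g x)) = f x" for x by (rule assms(2)) (simp add: f_inv_into_f)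
  then have "range f = range (\<lambda>x. f (inv g (g x)))" by simp
  then show ?thesis using finite_range_imageI[OF assms(1)] by simp
qed

lemma finite_range_theory_of:
  assumes "finite Pi"
  shows "finite (range (theory_of Pi i N V))"
proof (induction i)
  case 0
  show ?case
  proof (rule finite_range_factor)
    show "finite (range (\<lambda>x. {q \<in> Pi. x \<in> V q}))"
      by (rule finite_subset[of _ "Pow Pi"]) (auto simp: assms)
    show "{q \<in> Pi. x \<in> V q} = {q \<in> Pi. y \<in> V q} \<Longrightarrow> theory_of Pi 0 N V x = theory_of Pi 0 N V y"
      for x y by (rule theory_of_0_eqI)
  qed
next
  case (Suc i)
  let ?T = "theory_of Pi i N V"
  show ?case
  proof (rule finite_range_factor)
    show "finite (range (\<lambda>x. ({q \<in> Pi. x \<in> V q}, ?T ` \<Inter>(N x), ?T ` \<Union>(N x))))"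
      by (rule finite_subset[of _ "Pow Pi \<times> Pow (range ?T) \<times> Pow (range ?T)"])
        (auto simp: assms Suc.IH)
    show "({q \<in> Pi. x \<in> V q}, ?T ` \<Inter>(N x), ?T ` \<Union>(N x)) = ({q \<in> Pi. y \<in> V q}, ?T ` \<Inter>(N y), ?T ` \<Union>(N y))
      \<Longrightarrow> theory_of Pi (Suc i) N V x = theory_of Pi (Suc i) N V y" for x y
      by (intro theory_of_Suc_eqI) simp_all
  qed
qed

lemma finite_image_theory_of: "finite Pi \<Longrightarrow> finite (theory_of Pi i N V ` S)"
  by (rule finite_subset[OF image_mono[OF subset_UNIV] finite_range_theory_of])

lemma foldr_in_fm_upto:
  assumes "\<phi> \<in> fm_upto Pi i" "set xs \<subseteq> fm_upto Pi i"
  shows "foldr And xs \<phi> \<in> fm_upto Pi i" "foldr Or xs \<phi> \<in> fm_upto Pi i"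
  using assms by (induction xs) (auto simp: fm_upto_def)

lemma forces_foldr_And:
  "forces N V w (foldr And xs \<phi>) \<longleftrightarrow> forces N V w \<phi> \<and> (\<forall>\<psi>\<in>set xs. forces N V w \<psi>)"
  by (induction xs) auto

lemma forces_foldr_Or:
  "forces N V w (foldr Or xs \<phi>) \<longleftrightarrow> forces N V w \<phi> \<or> (\<exists>\<psi>\<in>set xs. forces N V w \<psi>)"
  by (induction xs) auto

lemma separating_formulas:
  assumes fin: "finite (theory_of Pi i N V ` S)"
    and notin: "theory_of Pi i N' V' y \<notin> theory_of Pi i N V ` S"
  obtains \<delta> where "\<delta> \<in> fm_upto Pi i" "\<not> forces N' V' y \<delta>" "\<forall>x\<in>S. forces N V x \<delta>"
  | \<chi> \<delta> where "\<chi> \<in> fm_upto Pi i" "\<delta> \<in> fm_upto Pi i" "forces N' V' y \<chi>" "\<not> forces N' V' y \<delta>"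
      "\<forall>x\<in>S. forces N V x \<chi> \<longrightarrow> forces N V x \<delta>"
proof -
  obtain S0 where S0: "S0 \<subseteq> S" "finite S0" "theory_of Pi i N V ` S = theory_of Pi i N V ` S0"
    using finite_subset_image[OF fin subset_refl] by blast
  have "\<forall>x\<in>S0. \<exists>\<psi>. \<psi> \<in> fm_upto Pi i \<and> forces N V x \<psi> \<noteq> forces N' V' y \<psi>"
  proof (rule ballI, rule ccontr)
    fix x assume "x \<in> S0" and "\<nexists>\<psi>. \<psi> \<in> fm_upto Pi i \<and> forces N V x \<psi> \<noteq> forces N' V' y \<psi>"
    then have "theory_of Pi i N V x = theory_of Pi i N' V' y" by (intro theory_of_eqI) blast
    then show False using notin S0(1) \<open>x \<in> S0\<close> by blast
  qed
  from bchoice[OF this] obtain \<psi>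
    where \<psi>: "\<forall>x\<in>S0. \<psi> x \<in> fm_upto Pi i \<and> forces N V x (\<psi> x) \<noteq> forces N' V' y (\<psi> x)" ..
  obtain xs where xs: "set xs = \<psi> ` S0"
    using finite_list[OF finite_imageI[OF S0(2)]] ..
  have xs_ok: "set xs \<subseteq> fm_upto Pi i" using xs \<psi> by auto
  define cs where "cs = filter (forces N' V' y) xs"
  define ds where "ds = filter (\<lambda>\<gamma>. \<not> forces N' V' y \<gamma>) xs"
  define \<delta> where "\<delta> = foldr Or ds Bot"
  have cs_ok: "set cs \<subseteq> fm_upto Pi i" "\<forall>\<gamma>\<in>set cs. forces N' V' y \<gamma>"
    using xs_ok by (auto simp: cs_def)
  have \<delta>: "\<delta> \<in> fm_upto Pi i"
    unfolding \<delta>_def using xs_ok by (intro foldr_in_fm_upto) (auto simp: ds_def fm_upto_def)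
  have \<delta>_y: "\<not> forces N' V' y \<delta>" by (simp add: \<delta>_def ds_def forces_foldr_Or)
  have sep: "forces N V x \<delta>" if "x \<in> S" "\<forall>\<gamma>\<in>set cs. forces N V x \<gamma>" for x
  proof -
    obtain x0 where x0: "x0 \<in> S0" "theory_of Pi i N V x = theory_of Pi i N V x0"
      using S0(3) \<open>x \<in> S\<close> by blast
    have \<psi>0: "\<psi> x0 \<in> fm_upto Pi i" "forces N V x0 (\<psi> x0) \<noteq> forces N' V' y (\<psi> x0)"
      using \<psi> x0(1) by auto
    have same: "forces N V x (\<psi> x0) \<longleftrightarrow> forces N V x0 (\<psi> x0)"
      by (rule theory_of_eqD[OF x0(2) \<psi>0(1)])
    show ?thesis
    proof (cases "forces N' V' y (\<psi> x0)")
      case True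
      then have "\<psi> x0 \<in> set cs" using xs x0(1) by (simp add: cs_def)
      then show ?thesis using that(2) same \<psi>0(2) True by simp
    next
      case False
      then have "\<psi> x0 \<in> set ds" using xs x0(1) by (simp add: ds_def)
      moreover have "forces N V x (\<psi> x0)" using same \<psi>0(2) False by simp
      ultimately show ?thesis by (auto simp: \<delta>_def forces_foldr_Or)
    qed
  qed
  show thesis
  proof (cases cs)
    case Nil
    then show thesis using that(1) \<delta> \<delta>_y sep by simp
  next
    case (Cons c cs')
    have "foldr And cs' c \<in> fm_upto Pi i" using cs_ok(1) Cons by (auto intro: foldr_in_fm_upto)
    moreover have "forces N' V' y (foldr And cs' c)" using cs_ok(2) Cons by (simp add: forces_foldr_And)
    ultimately show thesis using that(2) \<delta> \<delta>_y sep Cons by (simp add: forces_foldr_And)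
  qed
qed

lemma theory_of_image_Inter_subset:
  assumes "finite Pi"
    and M: "nIML1_model Pi W N V" "a \<in> W" and M': "nIML1_model Pi W' N' V'" "b \<in> W'"
    and eq: "theory_of Pi (Suc i) N V a = theory_of Pi (Suc i) N' V' b"
  shows "theory_of Pi i N' V' ` \<Inter>(N' b) \<subseteq> theory_of Pi i N V ` \<Inter>(N a)"
proof (rule image_subsetI, rule ccontr)
  fix y assume y: "y \<in> \<Inter>(N' b)" and notin: "theory_of Pi i N' V' y \<notin> theory_of Pi i N V ` \<Inter>(N a)"
  have fin: "finite (theory_of Pi i N V ` \<Inter>(N a))" using assms(1) by (rule finite_image_theory_of)
  have a_refl: "a \<in> \<Inter>(N a)" using nIML1_modelD(1)[OF M] .
  from fin notin show False
  proof (cases rule: separating_formulas)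
    case (1 \<delta>)
    then have "forces N' V' b \<delta>"
      using theory_of_eqD[OF eq fm_upto_SucI] a_refl by blast
    then have "forces N' V' y \<delta>"
      using forces_persistent[OF M'] y \<open>\<delta> \<in> fm_upto Pi i\<close> by (auto simp: fm_upto_def)
    then show False using 1 by blast
  next
    case (2 \<chi> \<delta>)
    then have "forces N V a (Imp \<chi> \<delta>)" by auto
    then have "forces N' V' b (Imp \<chi> \<delta>)" using theory_of_eqD[OF eq, of "Imp \<chi> \<delta>"] 2 by simp
    then show False using 2 y by auto
  qed
qed

lemma theory_of_image_Union_subset:
  assumes "finite Pi" and eq: "theory_of Pi (Suc i) N V a = theory_of Pi (Suc i) N' V' b"
  shows "theory_of Pi i N' V' ` \<Union>(N' b) \<subseteq> theory_of Pi i N V ` \<Union>(N a)"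
proof (rule image_subsetI, rule ccontr)
  fix y assume y: "y \<in> \<Union>(N' b)" and notin: "theory_of Pi i N' V' y \<notin> theory_of Pi i N V ` \<Union>(N a)"
  have fin: "finite (theory_of Pi i N V ` \<Union>(N a))" using assms(1) by (rule finite_image_theory_of)
  from fin notin show False
  proof (cases rule: separating_formulas)
    case (1 \<delta>)
    then have "forces N V a (Delta \<delta>)" by auto
    then have "forces N' V' b (Delta \<delta>)" using theory_of_eqD[OF eq, of "Delta \<delta>"] 1 by simp
    then show False using 1 y by auto
  next
    case (2 \<chi> \<delta>)
    then have "forces N V a (SImp \<chi> \<delta>)" by auto
    then have "forces N' V' b (SImp \<chi> \<delta>)" using theory_of_eqD[OF eq, of "SImp \<chi> \<delta>"] 2 by simp
    then show False using 2 y by auto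
  qed
qed

lemma rel_set_Ball_iff:
  assumes "rel_set R A B" "\<And>x y. R x y \<Longrightarrow> P x \<longleftrightarrow> Q y"
  shows "(\<forall>x\<in>A. P x) \<longleftrightarrow> (\<forall>y\<in>B. Q y)"
  using assms unfolding rel_set_def by metis

lemma rel_set_if_image_eq:
  assumes "f ` A = g ` B" "A \<subseteq> X" "B \<subseteq> Y"
  shows "rel_set (\<lambda>x y. x \<in> X \<and> y \<in> Y \<and> f x = g y) A B"
proof (rule rel_setI)
  fix x assume "x \<in> A"
  then obtain y where "y \<in> B" "f x = g y" using assms(1) by (metis imageE imageI)
  then show "\<exists>y\<in>B. x \<in> X \<and> y \<in> Y \<and> f x = g y" using assms(2,3) \<open>x \<in> A\<close> by blast
next
  fix y assume "y \<in> B"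
  then obtain x where "x \<in> A" "f x = g y" using assms(1) by (metis imageE imageI)
  then show "\<exists>x\<in>A. x \<in> X \<and> y \<in> Y \<and> f x = g y" using assms(2,3) \<open>y \<in> B\<close> by blast
qed

definition bisim_chain ::
  "'p set \<Rightarrow> ('a \<Rightarrow> 'a set set) \<Rightarrow> ('p \<Rightarrow> 'a set) \<Rightarrow> ('b \<Rightarrow> 'b set set) \<Rightarrow> ('p \<Rightarrow> 'b set) \<Rightarrow>
   nat \<Rightarrow> (nat \<Rightarrow> ('a \<times> 'b) set) \<Rightarrow> bool" where
  "bisim_chain Pi N1 V1 N2 V2 n R \<longleftrightarrow>
     (\<forall>i<n. R (Suc i) \<subseteq> R i) \<and>
     (\<forall>x y. (x, y) \<in> R 0 \<longrightarrow> (\<forall>q\<in>Pi. x \<in> V1 q \<longleftrightarrow> y \<in> V2 q)) \<and>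
     (\<forall>i<n. \<forall>x y. (x, y) \<in> R (Suc i) \<longrightarrow>
        rel_set (\<lambda>x' y'. (x', y') \<in> R i) (\<Inter>(N1 x)) (\<Inter>(N2 y)) \<and>
        rel_set (\<lambda>x' y'. (x', y') \<in> R i) (\<Union>(N1 x)) (\<Union>(N2 y)))"

lemma n_bisimilar_iff_bisim_chain:
  "n_bisimilar Pi W1 N1 V1 W2 N2 V2 n w1 w2 \<longleftrightarrow>
   (\<exists>R. R 0 \<subseteq> W1 \<times> W2 \<and> (w1, w2) \<in> R n \<and> bisim_chain Pi N1 V1 N2 V2 n R)"
  unfolding n_bisimilar_def bisim_chain_def rel_set_def by (simp add: Suc_le_eq conj_ac)

lemma bisim_chainD:
  assumes "bisim_chain Pi N1 V1 N2 V2 n R"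
  shows "i \<le> n \<Longrightarrow> R i \<subseteq> R 0"
    and "(x, y) \<in> R 0 \<Longrightarrow> q \<in> Pi \<Longrightarrow> x \<in> V1 q \<longleftrightarrow> y \<in> V2 q"
    and "i < n \<Longrightarrow> (x, y) \<in> R (Suc i) \<Longrightarrow> rel_set (\<lambda>x' y'. (x', y') \<in> R i) (\<Inter>(N1 x)) (\<Inter>(N2 y))"
    and "i < n \<Longrightarrow> (x, y) \<in> R (Suc i) \<Longrightarrow> rel_set (\<lambda>x' y'. (x', y') \<in> R i) (\<Union>(N1 x)) (\<Union>(N2 y))"
proof -
  have mono: "\<forall>i<n. R (Suc i) \<subseteq> R i" using assms unfolding bisim_chain_def by (elim conjE)
  show "i \<le> n \<Longrightarrow> R i \<subseteq> R 0"
  proof (induction i)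
    case (Suc i)
    then show ?case using mono by (meson Suc_le_lessD less_imp_le_nat subset_trans)
  qed simp
  show "(x, y) \<in> R 0 \<Longrightarrow> q \<in> Pi \<Longrightarrow> x \<in> V1 q \<longleftrightarrow> y \<in> V2 q"
    using assms unfolding bisim_chain_def by (elim conjE) blast
  show "i < n \<Longrightarrow> (x, y) \<in> R (Suc i) \<Longrightarrow> rel_set (\<lambda>x' y'. (x', y') \<in> R i) (\<Inter>(N1 x)) (\<Inter>(N2 y))"
    and "i < n \<Longrightarrow> (x, y) \<in> R (Suc i) \<Longrightarrow> rel_set (\<lambda>x' y'. (x', y') \<in> R i) (\<Union>(N1 x)) (\<Union>(N2 y))"
    using assms unfolding bisim_chain_def by (elim conjE; blast)+
qed

lemma bisim_chainI:
  assumes "\<And>i. i < n \<Longrightarrow> R (Suc i) \<subseteq> R i"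
    and "\<And>x y q. (x, y) \<in> R 0 \<Longrightarrow> q \<in> Pi \<Longrightarrow> x \<in> V1 q \<longleftrightarrow> y \<in> V2 q"
    and "\<And>i x y. i < n \<Longrightarrow> (x, y) \<in> R (Suc i) \<Longrightarrow>
      rel_set (\<lambda>x' y'. (x', y') \<in> R i) (\<Inter>(N1 x)) (\<Inter>(N2 y))"
    and "\<And>i x y. i < n \<Longrightarrow> (x, y) \<in> R (Suc i) \<Longrightarrow>
      rel_set (\<lambda>x' y'. (x', y') \<in> R i) (\<Union>(N1 x)) (\<Union>(N2 y))"
  shows "bisim_chain Pi N1 V1 N2 V2 n R"
  unfolding bisim_chain_def using assms by blast

lemma bisim_chain_forces_iff:
  assumes chain: "bisim_chain Pi N1 V1 N2 V2 n R"
  shows "i \<le> n \<Longrightarrow> (x, y) \<in> R i \<Longrightarrow> \<phi> \<in> fm_upto Pi i \<Longrightarrow> forces N1 V1 x \<phi> \<longleftrightarrow> forces N2 V2 y \<phi>"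
proof (induction \<phi> arbitrary: i x y)
  case (Atom q)
  then have "(x, y) \<in> R 0" using bisim_chainD(1)[OF chain] by blast
  then show ?case using bisim_chainD(2)[OF chain] Atom.prems(3) by (simp add: fm_upto_def)
next
  case (Imp a b)
  obtain j where j: "i = Suc j" using Imp.prems(3) by (cases i) (auto simp: fm_upto_def)
  with Imp.prems have "rel_set (\<lambda>x' y'. (x', y') \<in> R j) (\<Inter>(N1 x)) (\<Inter>(N2 y))"
    by (intro bisim_chainD(3)[OF chain]) simp_all
  moreover have "j \<le> n" "a \<in> fm_upto Pi j" "b \<in> fm_upto Pi j" using Imp.prems j by simp_all
  then have "(\<not> forces N1 V1 x' a \<or> forces N1 V1 x' b) \<longleftrightarrow> (\<not> forces N2 V2 y' a \<or> forces N2 V2 y' b)"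
    if "(x', y') \<in> R j" for x' y' using that by (simp add: Imp.IH)
  ultimately show ?case by (simp only: forces.simps rel_set_Ball_iff)
next
  case (SImp a b)
  obtain j where j: "i = Suc j" using SImp.prems(3) by (cases i) (auto simp: fm_upto_def)
  with SImp.prems have "rel_set (\<lambda>x' y'. (x', y') \<in> R j) (\<Union>(N1 x)) (\<Union>(N2 y))"
    by (intro bisim_chainD(4)[OF chain]) simp_all
  moreover have "j \<le> n" "a \<in> fm_upto Pi j" "b \<in> fm_upto Pi j" using SImp.prems j by simp_all
  then have "(\<not> forces N1 V1 x' a \<or> forces N1 V1 x' b) \<longleftrightarrow> (\<not> forces N2 V2 y' a \<or> forces N2 V2 y' b)"
    if "(x', y') \<in> R j" for x' y' using that by (simp add: SImp.IH)
  ultimately show ?case by (simp only: forces.simps rel_set_Ball_iff)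
next
  case (Delta a)
  obtain j where j: "i = Suc j" using Delta.prems(3) by (cases i) (auto simp: fm_upto_def)
  with Delta.prems have "rel_set (\<lambda>x' y'. (x', y') \<in> R j) (\<Union>(N1 x)) (\<Union>(N2 y))"
    by (intro bisim_chainD(4)[OF chain]) simp_all
  moreover have "j \<le> n" "a \<in> fm_upto Pi j" using Delta.prems j by simp_all
  then have "forces N1 V1 x' a \<longleftrightarrow> forces N2 V2 y' a" if "(x', y') \<in> R j" for x' y'
    using that by (simp add: Delta.IH)
  ultimately show ?case by (simp only: forces.simps rel_set_Ball_iff)
qed (auto simp: fm_upto_def)

lemma bisim_chain_theory_of:
  assumes "finite Pi" and M1: "nIML1_model Pi W1 N1 V1" and M2: "nIML1_model Pi W2 N2 V2"
  shows "bisim_chain Pi N1 V1 N2 V2 n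
    (\<lambda>i. {(x, y). x \<in> W1 \<and> y \<in> W2 \<and> theory_of Pi i N1 V1 x = theory_of Pi i N2 V2 y})"
    (is "bisim_chain _ _ _ _ _ _ ?R")
proof (rule bisim_chainI)
  fix i show "?R (Suc i) \<subseteq> ?R i" by (auto dest: theory_of_Suc_eqD)
next
  fix x y q assume "(x, y) \<in> ?R 0" "q \<in> Pi"
  then show "x \<in> V1 q \<longleftrightarrow> y \<in> V2 q"
    using theory_of_eqD[of Pi 0 N1 V1 x N2 V2 y "Atom q"] by (simp add: fm_upto_def)
next
  fix i x y assume "(x, y) \<in> ?R (Suc i)"
  then have xy: "x \<in> W1" "y \<in> W2" and eq: "theory_of Pi (Suc i) N1 V1 x = theory_of Pi (Suc i) N2 V2 y"
    by simp_all
  have "theory_of Pi i N1 V1 ` \<Inter>(N1 x) = theory_of Pi i N2 V2 ` \<Inter>(N2 y)"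
    by (rule equalityI theory_of_image_Inter_subset[OF assms(1) M2 xy(2) M1 xy(1) eq[symmetric]]
        theory_of_image_Inter_subset[OF assms(1) M1 xy(1) M2 xy(2) eq])+
  moreover have "\<Inter>(N1 x) \<subseteq> W1" "\<Inter>(N2 y) \<subseteq> W2"
    using nIML1_modelD(2,3)[OF M1 xy(1)] nIML1_modelD(2,3)[OF M2 xy(2)] by simp_all
  ultimately show "rel_set (\<lambda>x' y'. (x', y') \<in> ?R i) (\<Inter>(N1 x)) (\<Inter>(N2 y))"
    unfolding mem_Collect_eq prod.case by (rule rel_set_if_image_eq)
next
  fix i x y assume "(x, y) \<in> ?R (Suc i)"
  then have xy: "x \<in> W1" "y \<in> W2" and eq: "theory_of Pi (Suc i) N1 V1 x = theory_of Pi (Suc i) N2 V2 y"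
    by simp_all
  have "theory_of Pi i N1 V1 ` \<Union>(N1 x) = theory_of Pi i N2 V2 ` \<Union>(N2 y)"
    by (rule equalityI theory_of_image_Union_subset[OF assms(1) eq[symmetric]]
        theory_of_image_Union_subset[OF assms(1) eq])+
  moreover have "\<Union>(N1 x) \<subseteq> W1" "\<Union>(N2 y) \<subseteq> W2"
    using nIML1_modelD(3)[OF M1 xy(1)] nIML1_modelD(3)[OF M2 xy(2)] by simp_all
  ultimately show "rel_set (\<lambda>x' y'. (x', y') \<in> ?R i) (\<Union>(N1 x)) (\<Union>(N2 y))"
    unfolding mem_Collect_eq prod.case by (rule rel_set_if_image_eq)
qed

theorem theorem7p4:
  fixes Pi :: "'p set"
    and W1 :: "'a set" and N1 :: "'a \<Rightarrow> 'a set set" and V1 :: "'p \<Rightarrow> 'a set"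
    and W2 :: "'b set" and N2 :: "'b \<Rightarrow> 'b set set" and V2 :: "'p \<Rightarrow> 'b set"
    and n :: nat and w1 :: 'a and w2 :: 'b
  assumes "finite Pi"
    and "nIML1_model Pi W1 N1 V1"
    and "nIML1_model Pi W2 N2 V2"
    and "w1 \<in> W1" and "w2 \<in> W2"
  shows "n_bisimilar Pi W1 N1 V1 W2 N2 V2 n w1 w2 \<longleftrightarrow>
         (\<forall>\<phi>. atoms \<phi> \<subseteq> Pi \<and> deg \<phi> \<le> n \<longrightarrow> (forces N1 V1 w1 \<phi> \<longleftrightarrow> forces N2 V2 w2 \<phi>))"
proof
  assume "n_bisimilar Pi W1 N1 V1 W2 N2 V2 n w1 w2"
  then obtain R where chain: "bisim_chain Pi N1 V1 N2 V2 n R" and w: "(w1, w2) \<in> R n"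
    unfolding n_bisimilar_iff_bisim_chain by blast
  show "\<forall>\<phi>. atoms \<phi> \<subseteq> Pi \<and> deg \<phi> \<le> n \<longrightarrow> (forces N1 V1 w1 \<phi> \<longleftrightarrow> forces N2 V2 w2 \<phi>)"
  proof (intro allI impI)
    fix \<phi> assume "atoms \<phi> \<subseteq> Pi \<and> deg \<phi> \<le> n"
    then have "\<phi> \<in> fm_upto Pi n" by (simp add: fm_upto_def)
    then show "forces N1 V1 w1 \<phi> \<longleftrightarrow> forces N2 V2 w2 \<phi>"
      by (rule bisim_chain_forces_iff[OF chain order_refl w])
  qed
next
  assume "\<forall>\<phi>. atoms \<phi> \<subseteq> Pi \<and> deg \<phi> \<le> n \<longrightarrow> (forces N1 V1 w1 \<phi> \<longleftrightarrow> forces N2 V2 w2 \<phi>)"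
  then have "theory_of Pi n N1 V1 w1 = theory_of Pi n N2 V2 w2"
    by (intro theory_of_eqI) (simp add: fm_upto_def)
  define R where "R i = {(x, y). x \<in> W1 \<and> y \<in> W2 \<and> theory_of Pi i N1 V1 x = theory_of Pi i N2 V2 y}"
    for i
  have "R 0 \<subseteq> W1 \<times> W2" "(w1, w2) \<in> R n" "bisim_chain Pi N1 V1 N2 V2 n R"
    using \<open>theory_of Pi n N1 V1 w1 = _\<close> assms(4,5) bisim_chain_theory_of[OF assms(1-3)]
    unfolding R_def by auto
  then show "n_bisimilar Pi W1 N1 V1 W2 N2 V2 n w1 w2"
    unfolding n_bisimilar_iff_bisim_chain by blast
qed

end
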